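(* Let $\Lambda$ be a random variable with support in $[0,1]$ and $p=E[\Lambda]\in(0,1)$. Let $\boldsymbol{I}$ be a $d$-variate Bernoulli vector with pmf $f_{\boldsymbol{I}}(\boldsymbol{i})=\int_0^1\lambda^{i_\bullet}(1-\lambda)^{d-i_\bullet}\,dF_\Lambda(\lambda)$, $\boldsymbol{i}\in\{0,1\}^d$, where $i_\bullet=i_1+\dots+i_d$. Let $U_m=U_{0,m}^{1-p}U_{1,m}^{I_m}$, $m=1,\dots,d$, with $\boldsymbol{U}_0,\boldsymbol{U}_1$ vectors of independent standard uniform random variables and $\boldsymbol{I},\boldsymbol{U}_0,\boldsymbol{U}_1$ mutually independent. Then the copula of $\boldsymbol{U}$ is $$C(\boldsymbol{u})=E\left[\prod_{m=1}^d\left(u_m^{(1-p)^{-1}}-\frac{\Lambda}{p}\left\{u_m^{(1-p)^{-1}}-u_m\right\}\right)\right],\qquad\boldsymbol{u}\in[0,1]^d,$$ and, for $\boldsymbol{u}\in(0,1]^d$, $$C(\boldsymbol{u})=\prod_{m=1}^d u_m^{(1-p)^{-1}}\left(1+\sum_{k=1}^d(-1)^k\sum_{1\le j_1<\dots<j_k\le d}\frac{E[\Lambda^k]}{p^k}\prod_{n=1}^k\left(1-u_{j_n}^{-\frac{p}{1-p}}\right)\right).$$ *)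

theory Defs
  imports "HOL-Probability.Probability"
begin

definition is_copula :: "nat \<Rightarrow> ((nat \<Rightarrow> real) \<Rightarrow> real) \<Rightarrow> bool" where
  "is_copula d C \<longleftrightarrow>
     (\<exists>N :: (nat \<Rightarrow> real) measure.
        prob_space N \<and> sets N = sets (PiM {..<d} (\<lambda>_. borel)) \<and>
        (\<forall>m<d. distr N borel (\<lambda>v. v m) = uniform_measure lborel {0..1}) \<and>
        (\<forall>u \<in> PiE {..<d} (\<lambda>_. {0..1}).
            C u = measure N {v \<in> space N. \<forall>m<d. v m \<le> u m}))"

definition is_copula_of ::
    "'a measure \<Rightarrow> nat \<Rightarrow> ('a \<Rightarrow> nat \<Rightarrow> real) \<Rightarrow> ((nat \<Rightarrow> real) \<Rightarrow> real) \<Rightarrow> bool" where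
  "is_copula_of M d X C \<longleftrightarrow>
     is_copula d C \<and>
     (\<forall>x :: nat \<Rightarrow> real.
        measure M {\<omega> \<in> space M. \<forall>m<d. X \<omega> m \<le> x m} =
        C (restrict (\<lambda>m. measure M {\<omega> \<in> space M. X \<omega> m \<le> x m}) {..<d}))"

end

theory Submission
  imports Defs
begin

text \<open>Write \<open>a = 1 - p\<close>. Conditionally on \<open>I = i\<close> the coordinates
  \<open>U\<^sub>m = U\<^sub>0\<^sub>m powr a * U\<^sub>1\<^sub>m powr i\<^sub>m\<close> are independent, and a one-dimensional
  integration gives \<open>P(U\<^sub>m \<le> u) = u powr (1/a)\<close> if \<open>i\<^sub>m = 0\<close> and
  \<open>(u - a * u powr (1/a)) / (1 - a)\<close> if \<open>i\<^sub>m = 1\<close>. The mixed Bernoulli weights of \<open>I\<close> are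
  expectations of products of \<open>Lam\<close> and \<open>1 - Lam\<close>, so summing over \<open>i\<close> turns the joint
  distribution function into \<open>E \<Prod>\<^sub>m ((1 - Lam) G\<^sub>0(u\<^sub>m) + Lam G\<^sub>1(u\<^sub>m))\<close>, which is the
  claimed \<open>C\<close>. As \<open>E Lam = p\<close>, each factor has mean \<open>u\<^sub>m\<close>: the margins are uniform and
  \<open>C\<close> is the copula of \<open>U\<close>. The second formula is the inclusion-exclusion expansion of
  the product.\<close>

abbreviation uniform01 :: "real measure" where
  "uniform01 \<equiv> uniform_measure lborel {0..1}"

lemma prob_space_uniform01: "prob_space uniform01"
  by (rule prob_space_uniform_measure) auto

lemma emeasure_uniform01:
  "A \<in> sets borel \<Longrightarrow> emeasure uniform01 A = emeasure lborel ({0..1} \<inter> A)"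
  by (subst emeasure_uniform_measure) (auto simp: divide_ennreal_def)

lemma measure_uniform01_atMost: "measure uniform01 {..t} = max 0 (min 1 t)"
proof -
  have "measure uniform01 {..t} = measure lborel ({0..1} \<inter> {..t})"
    by (subst measure_uniform_measure) auto
  also have "{0..1} \<inter> {..t} = {0..max 0 (min 1 t)} - (if t < 0 then {0} else {})"
    by auto
  also have "measure lborel \<dots> = max 0 (min 1 t)"
    by (cases "t < 0") auto
  finally show ?thesis .
qed

lemma powr_le_iff_le_powr_inverse:
  fixes a t u :: real
  assumes "0 < a" "0 \<le> t" "0 \<le> u"
  shows "t powr a \<le> u \<longleftrightarrow> t \<le> u powr (1/a)"
proof
  assume "t powr a \<le> u"
  then have "(t powr a) powr (1/a) \<le> u powr (1/a)"
    using assms by (intro powr_mono2) auto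
  then show "t \<le> u powr (1/a)" using assms by (simp add: powr_powr)
next
  assume "t \<le> u powr (1/a)"
  then have "t powr a \<le> (u powr (1/a)) powr a"
    using assms by (intro powr_mono2) auto
  then show "t powr a \<le> u" using assms by (simp add: powr_powr)
qed

lemma powr_inverse_le_self:
  fixes a u :: real
  assumes "0 < a" "a \<le> 1" "0 \<le> u" "u \<le> 1"
  shows "u powr (1/a) \<le> u"
proof (cases "u = 0")
  case False
  have "u powr (1/a) \<le> u powr 1"
    using assms False by (intro powr_mono') (auto simp: field_simps)
  then show ?thesis using assms by simp
qed simp

text \<open>For \<open>e = 0\<close> the junk value \<open>0 powr 0 = 0\<close> puts the null set \<open>{0}\<close> into the event.\<close>
lemma emeasure_uniform01_mult_powr_le:
  fixes c u :: real and e :: nat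
  assumes c: "0 \<le> c" and u: "0 \<le> u" and e: "e \<in> {0, 1}"
  shows "emeasure uniform01 {y. c * y powr real e \<le> u}
         = (if c \<le> u then 1 else if e = 0 then 0 else ennreal (u / c))"
proof -
  have m: "{y. c * y powr real e \<le> u} \<in> sets borel" by measurable
  have "{0..1} \<inter> {y. c * y powr real e \<le> u}
        = (if c \<le> u then {0..1} else if e = 0 then {0} else {0..u / c})"
  proof (cases "c \<le> u")
    case True
    have "c * y \<le> u" if "0 \<le> y" "y \<le> 1" for y
      using mult_left_mono[of y 1 c] True that c by auto
    then show ?thesis using True e by auto
  next
    case False
    have "x \<le> 1" if "0 \<le> x" "x * c \<le> u" for x
      using False u that by (smt (verit, del_insts) mult_le_cancel_right1)
    then show ?thesis using False e u by (auto simp: powr_zero_eq_one field_simps)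
  qed
  then show ?thesis
    using u c by (auto simp: emeasure_uniform01[OF m] divide_ennreal_def)
qed

lemma nn_integral_powr_neg_Icc:
  fixes a c :: real
  assumes a: "a < 1" and c: "0 < c" "c \<le> 1"
  shows "(\<integral>\<^sup>+ t. ennreal (t powr (-a)) * indicator {c..1} t \<partial>lborel)
         = ennreal ((1 - c powr (1 - a)) / (1 - a))"
proof -
  have "(\<integral>\<^sup>+ t. ennreal (t powr (-a)) * indicator {c..1} t \<partial>lborel)
      = ennreal ((\<lambda>t. t powr (1 - a) / (1 - a)) 1 - (\<lambda>t. t powr (1 - a) / (1 - a)) c)"
  proof (rule nn_integral_FTC_Icc)
    fix t assume "t \<in> {c..1}"
    then have "0 < t" using c by auto
    then have "((\<lambda>t. t powr (1 - a) / (1 - a)) has_real_derivative (1 - a) * t powr (1 - a - 1) / (1 - a)) (at t)"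
      by (auto intro!: derivative_eq_intros)
    then show "((\<lambda>t. t powr (1 - a) / (1 - a)) has_real_derivative t powr (-a)) (at t)"
      using a by simp
  qed (use c in auto)
  then show ?thesis by (simp add: diff_divide_distrib)
qed

lemma nn_integral_uniform01_powr_le:
  fixes a u :: real
  assumes a: "0 < a" and u: "0 \<le> u" "u \<le> 1"
  shows "(\<integral>\<^sup>+ t. (if t powr a \<le> u then 1 else 0) \<partial>uniform01) = ennreal (u powr (1/a))"
proof -
  have le1: "u powr (1/a) \<le> 1" using a u by (intro powr_le1) auto
  have "(\<integral>\<^sup>+ t. (if t powr a \<le> u then 1 else 0) \<partial>uniform01)
      = (\<integral>\<^sup>+ t. (if t powr a \<le> u then 1 else 0) * indicator {0..1} t \<partial>lborel)"
    by (subst nn_integral_uniform_measure) (auto simp: divide_ennreal_def)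
  also have "\<dots> = (\<integral>\<^sup>+ t. indicator {0..u powr (1/a)} t \<partial>lborel)"
    using le1 powr_le_iff_le_powr_inverse[OF a _ u(1)]
    by (intro nn_integral_cong) (auto split: split_indicator)
  also have "\<dots> = ennreal (u powr (1/a))"
    by simp
  finally show ?thesis .
qed

lemma nn_integral_uniform01_powr_le_else_quotient:
  fixes a u :: real
  assumes a: "0 < a" "a < 1" and u: "0 \<le> u" "u \<le> 1"
  shows "(\<integral>\<^sup>+ t. (if t powr a \<le> u then 1 else ennreal (u / t powr a)) \<partial>uniform01)
         = ennreal ((u - a * u powr (1/a)) / (1 - a))"
proof (cases "u = 0")
  case True
  have "(\<integral>\<^sup>+ t. (if t powr a \<le> u then 1 else ennreal (u / t powr a)) \<partial>uniform01)
      = (\<integral>\<^sup>+ t. indicator {0} t \<partial>uniform01)"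
    using True a by (intro nn_integral_cong) (auto split: split_indicator)
  also have "\<dots> = 0"
    by (simp add: emeasure_uniform01)
  finally show ?thesis using True by simp
next
  case False
  define c where "c = u powr (1/a)"
  have c: "0 < c" "c \<le> 1" "c \<le> u"
    using False a u powr_inverse_le_self[of a u] by (auto simp: c_def intro: powr_le1)
  have ca: "c powr a = u" using a u by (simp add: c_def powr_powr)
  have below: "t powr a \<le> u \<longleftrightarrow> t \<le> c" if "0 \<le> t" for t
    using powr_le_iff_le_powr_inverse[OF a(1) that u(1)] by (simp add: c_def)
  have "(\<integral>\<^sup>+ t. (if t powr a \<le> u then 1 else ennreal (u / t powr a)) \<partial>uniform01)
      = (\<integral>\<^sup>+ t. (if t powr a \<le> u then 1 else ennreal (u / t powr a)) * indicator {0..1} t \<partial>lborel)"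
    by (subst nn_integral_uniform_measure) (auto simp: divide_ennreal_def)
  also have "\<dots> = (\<integral>\<^sup>+ t. indicator {0..<c} t + ennreal (u * t powr (-a)) * indicator {c..1} t \<partial>lborel)"
  proof (intro nn_integral_cong)
    fix t :: real
    consider "t < 0" | "0 \<le> t" "t < c" | "t = c" | "c < t" | "1 < t" by fastforce
    then show "(if t powr a \<le> u then 1 else ennreal (u / t powr a)) * indicator {0..1} t
        = indicator {0..<c} t + ennreal (u * t powr (-a)) * indicator {c..1} t"
      using c ca below[of t] by cases (auto split: split_indicator simp: powr_minus_divide)
  qed
  also have "\<dots> = ennreal c + ennreal u * ennreal ((1 - c powr (1 - a)) / (1 - a))"
    using c u
    by (subst nn_integral_add)
      (auto simp: ennreal_mult mult.assoc nn_integral_cmult nn_integral_powr_neg_Icc[OF a(2) c(1,2)])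
  also have "\<dots> = ennreal ((u - a * c) / (1 - a))"
  proof -
    have "u * c powr (1 - a) = c" using a c ca by (simp add: powr_diff)
    then have "c + u * ((1 - c powr (1 - a)) / (1 - a)) = (u - a * c) / (1 - a)"
      using a by (simp add: field_simps)
    moreover have "0 \<le> (1 - c powr (1 - a)) / (1 - a)"
      using a c powr_le1[of "1 - a" c] by simp
    moreover have "ennreal c + ennreal u * ennreal X = ennreal (c + u * X)" if "0 \<le> X" for X
      using c u that by (simp add: ennreal_plus ennreal_mult)
    ultimately show ?thesis by metis
  qed
  finally show ?thesis by (simp add: c_def)
qed

text \<open>The distribution function of \<open>T powr a * Y powr e\<close> for independent \<open>T\<close>, \<open>Y\<close> uniform on
  \<open>[0,1]\<close> and \<open>e \<in> {0,1}\<close>.\<close>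
definition powr_mult_uniform_cdf :: "real \<Rightarrow> nat \<Rightarrow> real \<Rightarrow> real" where
  "powr_mult_uniform_cdf a e u = (if e = 0 then u powr (1/a) else (u - a * u powr (1/a)) / (1 - a))"

lemma powr_mult_uniform_cdf_nonneg:
  fixes a u :: real
  assumes "0 < a" "a < 1" "0 \<le> u" "u \<le> 1"
  shows "0 \<le> powr_mult_uniform_cdf a e u"
proof -
  have "a * u powr (1/a) \<le> u powr (1/a)"
    using assms by (simp add: mult_left_le_one_le)
  then show ?thesis
    using assms powr_inverse_le_self[of a u] by (auto simp: powr_mult_uniform_cdf_def)
qed

lemma nn_integral_uniform01_fibre:
  fixes a u :: real and e :: nat
  assumes a: "0 < a" "a < 1" and u: "0 \<le> u" "u \<le> 1"
  shows "(\<integral>\<^sup>+ t. (if t powr a \<le> u then 1 else if e = 0 then 0 else ennreal (u / t powr a)) \<partial>uniform01)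
         = ennreal (powr_mult_uniform_cdf a e u)"
proof -
  have "(\<lambda>t. if t powr a \<le> u then 1 else if e = 0 then 0 else ennreal (u / t powr a))
      = (if e = 0 then (\<lambda>t. if t powr a \<le> u then 1 else 0)
         else (\<lambda>t. if t powr a \<le> u then 1 else ennreal (u / t powr a)))"
    by auto
  then show ?thesis
    using nn_integral_uniform01_powr_le[OF a(1) u] nn_integral_uniform01_powr_le_else_quotient[OF a u]
    by (simp add: powr_mult_uniform_cdf_def)
qed

lemma measure_PiM_uniform01_pair_powr_mult_le:
  fixes a :: real and u :: "nat \<Rightarrow> real" and e :: "nat \<Rightarrow> nat"
  assumes a: "0 < a" "a < 1"
    and u: "\<And>m. m < d \<Longrightarrow> u m \<in> {0..1}" and e: "\<And>m. m < d \<Longrightarrow> e m \<in> {0, 1}"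
  defines "Q \<equiv> PiM {..<d} (\<lambda>_. uniform01)"
  shows "measure (Q \<Otimes>\<^sub>M Q) {xy \<in> space (Q \<Otimes>\<^sub>M Q). \<forall>m<d. fst xy m powr a * snd xy m powr real (e m) \<le> u m}
         = (\<Prod>m<d. powr_mult_uniform_cdf a (e m) (u m))"
proof -
  interpret product_prob_space "\<lambda>_. uniform01"
    by (rule product_prob_spaceI) (rule prob_space_uniform01)
  interpret Q: prob_space Q
    unfolding Q_def by (rule prob_space_PiM) (rule prob_space_uniform01)
  let ?A = "{xy \<in> space (Q \<Otimes>\<^sub>M Q). \<forall>m<d. fst xy m powr a * snd xy m powr real (e m) \<le> u m}"
  let ?fibre = "\<lambda>m t. if t powr a \<le> u m then 1 else if e m = 0 then 0 else ennreal (u m / t powr a)"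
  have A: "?A \<in> sets (Q \<Otimes>\<^sub>M Q)"
    unfolding Q_def by measurable
  have "emeasure Q (Pair x -` ?A) = (\<Prod>m<d. ?fibre m (x m))" if "x \<in> space Q" for x
  proof -
    have "Pair x -` ?A = PiE {..<d} (\<lambda>m. {y. x m powr a * y powr real (e m) \<le> u m})"
      using that by (intro set_eqI) (auto simp add: Q_def space_pair_measure space_PiM PiE_iff)
    then have "emeasure Q (Pair x -` ?A) = (\<Prod>m<d. emeasure uniform01 {y. x m powr a * y powr real (e m) \<le> u m})"
      unfolding Q_def by (simp only:) (rule emeasure_PiM; simp)
    also have "\<dots> = (\<Prod>m<d. ?fibre m (x m))"
      using u e by (intro prod.cong refl emeasure_uniform01_mult_powr_le) auto
    finally show ?thesis .
  qed
  then have "emeasure (Q \<Otimes>\<^sub>M Q) ?A = (\<integral>\<^sup>+ x. (\<Prod>m<d. ?fibre m (x m)) \<partial>Q)"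
    unfolding Q.emeasure_pair_measure_alt[OF A] by (intro nn_integral_cong)
  also have "\<dots> = (\<Prod>m<d. \<integral>\<^sup>+ t. ?fibre m t \<partial>uniform01)"
    unfolding Q_def by (rule product_nn_integral_prod) auto
  also have "\<dots> = (\<Prod>m<d. ennreal (powr_mult_uniform_cdf a (e m) (u m)))"
    using u by (intro prod.cong refl nn_integral_uniform01_fibre[OF a]) auto
  also have "\<dots> = ennreal (\<Prod>m<d. powr_mult_uniform_cdf a (e m) (u m))"
    using u by (intro prod_ennreal powr_mult_uniform_cdf_nonneg[OF a]) auto
  moreover have "0 \<le> (\<Prod>m<d. powr_mult_uniform_cdf a (e m) (u m))"
    using u by (intro prod_nonneg powr_mult_uniform_cdf_nonneg[OF a]) auto
  ultimately show ?thesis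
    by (simp add: measure_def)
qed

lemma bernoulli_weight_eq_prod:
  fixes L :: "'a::comm_ring_1"
  assumes "\<forall>m<d. i m \<in> {0, 1::nat}"
  shows "L ^ (\<Sum>m<d. i m) * (1 - L) ^ (d - (\<Sum>m<d. i m)) = (\<Prod>m<d. if i m = 0 then 1 - L else L)"
  using assms
proof (induction d)
  case (Suc d)
  have prems: "\<forall>m<d. i m \<in> {0, 1}"
    using Suc.prems by simp
  have "(\<Sum>m<d. i m) \<le> (\<Sum>m<d. 1)"
    using prems by (intro sum_mono) auto
  then have le: "(\<Sum>m<d. i m) \<le> d" by simp
  from Suc.prems have "i d = 0 \<or> i d = 1" by auto
  then show ?case
    using Suc.IH[OF prems] le by (elim disjE) (auto simp: Suc_diff_le mult_ac)
qed simp

lemma sum_prod_PiE_01: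
  fixes f :: "nat \<Rightarrow> nat \<Rightarrow> 'a::comm_semiring_1"
  shows "(\<Sum>i\<in>PiE {..<d} (\<lambda>_. {0, 1}). \<Prod>m<d. f m (i m)) = (\<Prod>m<d. f m 0 + f m 1)"
  using prod_sum_PiE[of "{..<d}" "\<lambda>_. {0::nat, 1}" f] by simp

lemma prod_one_minus_mult_expand:
  fixes c :: "'a::comm_ring_1" and y :: "'b \<Rightarrow> 'a"
  assumes "finite A"
  shows "(\<Prod>m\<in>A. 1 - c * y m)
         = 1 + (\<Sum>k = 1..card A. (-1) ^ k * c ^ k * (\<Sum>J\<in>{J. J \<subseteq> A \<and> card J = k}. \<Prod>j\<in>J. y j))"
proof -
  let ?t = "\<lambda>J. (- c) ^ card J * (\<Prod>j\<in>J. y j)"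
  have "(\<Prod>m\<in>A. 1 - c * y m) = (\<Prod>m\<in>A. (- c * y m) + 1)"
    by simp
  also have "\<dots> = (\<Sum>J\<in>Pow A. (\<Prod>m\<in>J. - c * y m) * (\<Prod>m\<in>A - J. 1))"
    by (rule prod_add[OF assms])
  also have "\<dots> = (\<Sum>J\<in>Pow A. ?t J)"
    by (intro sum.cong refl) (simp only: prod.distrib prod_constant power_one mult_1_right)
  also have "\<dots> = (\<Sum>k = 0..card A. \<Sum>J\<in>{J \<in> Pow A. card J = k}. ?t J)"
    using assms by (intro sum.group[symmetric]) (auto simp: card_mono)
  also have "\<dots> = (\<Sum>k = 0..card A. (-1) ^ k * c ^ k * (\<Sum>J\<in>{J. J \<subseteq> A \<and> card J = k}. \<Prod>j\<in>J. y j))"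
    by (intro sum.cong refl) (auto simp: sum_distrib_left power_minus[of c] intro!: sum.cong)
  also have "\<dots> = 1 + (\<Sum>k = 1..card A. (-1) ^ k * c ^ k * (\<Sum>J\<in>{J. J \<subseteq> A \<and> card J = k}. \<Prod>j\<in>J. y j))"
  proof -
    have "{J. J \<subseteq> A \<and> card J = 0} = {{}}"
      using assms by (auto dest: finite_subset)
    then show ?thesis
      by (simp add: sum.atLeast_Suc_atMost)
  qed
  finally show ?thesis .
qed

text \<open>Valid for every index \<open>m\<close>: outside \<open>I\<close> the component is the constant \<open>undefined\<close>.\<close>
lemma measurable_PiM_component:
  assumes X: "X \<in> M \<rightarrow>\<^sub>M PiM I (\<lambda>_. borel)"
  shows "(\<lambda>\<omega>. X \<omega> m) \<in> borel_measurable M"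
proof (cases "m \<in> I")
  case True
  then show ?thesis
    by (intro measurable_compose[OF X measurable_component_singleton])
next
  case False
  then have "X \<omega> m = undefined" if "\<omega> \<in> space M" for \<omega>
    using measurable_space[OF X that] by (auto simp: space_PiM PiE_def extensional_def)
  then show ?thesis
    by (subst measurable_cong[where g = "\<lambda>_. undefined"]) auto
qed

lemma (in prob_space) distr_PiM_of_indep_components:
  assumes I: "I \<noteq> {}" and V: "V \<in> M \<rightarrow>\<^sub>M PiM I M'"
    and indep: "indep_vars M' (\<lambda>i \<omega>. V \<omega> i) I"
    and law: "\<And>i. i \<in> I \<Longrightarrow> distr M (M' i) (\<lambda>\<omega>. V \<omega> i) = N i"
  shows "distr M (PiM I M') V = PiM I N"
proof -
  have rv: "random_variable (M' i) (\<lambda>\<omega>. V \<omega> i)" if "i \<in> I" for i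
    using that by (intro measurable_compose[OF V measurable_component_singleton])
  have "distr M (PiM I M') V = distr M (PiM I M') (\<lambda>\<omega>. \<lambda>i\<in>I. V \<omega> i)"
    using measurable_space[OF V]
    by (intro distr_cong) (auto simp: space_PiM PiE_def extensional_def restrict_def fun_eq_iff)
  also have "\<dots> = PiM I (\<lambda>i. distr M (M' i) (\<lambda>\<omega>. V \<omega> i))"
    using indep_vars_iff_distr_eq_PiM'[OF I rv] indep by simp
  also have "\<dots> = PiM I N"
    using law by (intro PiM_cong) auto
  finally show ?thesis .
qed

lemma (in prob_space) AE_uniform01_in_unit_interval:
  assumes "random_variable borel X" and "distr M borel X = uniform01"
  shows "AE \<omega> in M. X \<omega> \<in> {0..1}"
proof -
  have "AE x in uniform01. x \<in> {0..1}"
    by (rule AE_uniform_measureI) auto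
  then have "AE x in distr M borel X. x \<in> {0..1}"
    by (simp only: assms(2))
  then show ?thesis
    using assms(1) by (subst (asm) AE_distr_iff) auto
qed

lemma continuous_on_If_const [continuous_intros]:
  "continuous_on S f \<Longrightarrow> continuous_on S g \<Longrightarrow> continuous_on S (\<lambda>x. if c then f x else g x)"
  by (cases c) auto

locale bernoulli_mixture_model = prob_space M for M :: "'a measure" +
  fixes d :: nat and Lam :: "'a \<Rightarrow> real" and I U0 U1 :: "'a \<Rightarrow> nat \<Rightarrow> real" and p :: real
  assumes Lam_measurable [measurable]: "Lam \<in> borel_measurable M"
    and Lam_AE_in_unit_interval: "AE \<omega> in M. Lam \<omega> \<in> {0..1}"
    and p_def: "p = expectation Lam"
    and p_pos: "0 < p" and p_less_1: "p < 1"
    and I_measurable [measurable]: "I \<in> M \<rightarrow>\<^sub>M PiM {..<d} (\<lambda>_. borel)"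
    and U0_measurable [measurable]: "U0 \<in> M \<rightarrow>\<^sub>M PiM {..<d} (\<lambda>_. borel)"
    and U1_measurable [measurable]: "U1 \<in> M \<rightarrow>\<^sub>M PiM {..<d} (\<lambda>_. borel)"
    and pmf_I: "\<And>i. i \<in> PiE {..<d} (\<lambda>_. {0::nat, 1}) \<Longrightarrow>
        prob {\<omega> \<in> space M. \<forall>m<d. I \<omega> m = real (i m)} =
        expectation (\<lambda>\<omega>. Lam \<omega> ^ (\<Sum>m<d. i m) * (1 - Lam \<omega>) ^ (d - (\<Sum>m<d. i m)))"
    and indep_U0: "indep_vars (\<lambda>_. borel) (\<lambda>m \<omega>. U0 \<omega> m) {..<d}"
    and indep_U1: "indep_vars (\<lambda>_. borel) (\<lambda>m \<omega>. U1 \<omega> m) {..<d}"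
    and distr_U0: "\<And>m. m < d \<Longrightarrow> distr M borel (\<lambda>\<omega>. U0 \<omega> m) = uniform01"
    and distr_U1: "\<And>m. m < d \<Longrightarrow> distr M borel (\<lambda>\<omega>. U1 \<omega> m) = uniform01"
    and indep_I_U0_U1: "indep_vars (\<lambda>_. PiM {..<d} (\<lambda>_. borel)) (\<lambda>k. [I, U0, U1] ! k) {0, 1, 2}"
begin

abbreviation "borel_vec \<equiv> PiM {..<d} (\<lambda>_. borel :: real measure)"
abbreviation "uniform01_vec \<equiv> PiM {..<d} (\<lambda>_. uniform01)"

definition U :: "'a \<Rightarrow> nat \<Rightarrow> real" where
  "U \<omega> m = U0 \<omega> m powr (1 - p) * U1 \<omega> m powr I \<omega> m"

definition I_event :: "(nat \<Rightarrow> nat) \<Rightarrow> 'a set" where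
  "I_event i = {\<omega> \<in> space M. \<forall>m<d. I \<omega> m = real (i m)}"

text \<open>The conditional distribution function of each \<open>U \<omega> m\<close> given \<open>Lam = L\<close>, namely
  \<open>(1 - L) * G\<^sub>0 + L * G\<^sub>1\<close> with \<open>G\<^sub>e = powr_mult_uniform_cdf (1 - p) e\<close>.\<close>
definition cond_cdf :: "real \<Rightarrow> real \<Rightarrow> real" where
  "cond_cdf L v = v powr (1 / (1 - p)) - L / p * (v powr (1 / (1 - p)) - v)"

lemma I_component_measurable [measurable]: "(\<lambda>\<omega>. I \<omega> m) \<in> borel_measurable M"
  by (rule measurable_PiM_component[OF I_measurable])

lemma U0_component_measurable [measurable]: "(\<lambda>\<omega>. U0 \<omega> m) \<in> borel_measurable M"
  by (rule measurable_PiM_component[OF U0_measurable])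

lemma U1_component_measurable [measurable]: "(\<lambda>\<omega>. U1 \<omega> m) \<in> borel_measurable M"
  by (rule measurable_PiM_component[OF U1_measurable])

lemma U_component_measurable [measurable]: "(\<lambda>\<omega>. U \<omega> m) \<in> borel_measurable M"
  unfolding U_def by measurable

lemma I_event_sets [measurable]: "I_event i \<in> events"
  unfolding I_event_def by measurable

lemma prob_I_in_Int_U0U1_in:
  assumes S: "S \<in> sets borel_vec" and T: "T \<in> sets (borel_vec \<Otimes>\<^sub>M borel_vec)"
  shows "prob {\<omega> \<in> space M. I \<omega> \<in> S \<and> (U0 \<omega>, U1 \<omega>) \<in> T}
       = prob {\<omega> \<in> space M. I \<omega> \<in> S} * prob {\<omega> \<in> space M. (U0 \<omega>, U1 \<omega>) \<in> T}"
proof -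
  let ?X = "\<lambda>\<omega> k. ([I, U0, U1] ! k) \<omega>"
  let ?A = "{f \<in> space (PiM {0::nat} (\<lambda>_. borel_vec)). f 0 \<in> S}"
  let ?B = "{f \<in> space (PiM {1::nat, 2} (\<lambda>_. borel_vec)). (f 1, f 2) \<in> T}"
  have A: "?A \<in> sets (PiM {0} (\<lambda>_. borel_vec))"
    using measurable_sets[OF measurable_component_singleton[of 0 "{0::nat}"] S]
    by (simp add: vimage_def Int_def conj_commute)
  have "(\<lambda>f. (f 1, f 2)) \<in> PiM {1::nat, 2} (\<lambda>_. borel_vec) \<rightarrow>\<^sub>M borel_vec \<Otimes>\<^sub>M borel_vec"
    by (auto intro!: measurable_Pair measurable_component_singleton)
  from measurable_sets[OF this T] have B: "?B \<in> sets (PiM {1, 2} (\<lambda>_. borel_vec))"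
    by (simp add: vimage_def Int_def conj_commute)
  have "indep_var (PiM {0} (\<lambda>_. borel_vec)) (\<lambda>\<omega>. restrict (?X \<omega>) {0})
      (PiM {1, 2} (\<lambda>_. borel_vec)) (\<lambda>\<omega>. restrict (?X \<omega>) {1, 2})"
    by (rule indep_var_restrict[OF indep_I_U0_U1]) auto
  from indep_varD[OF this A B] show ?thesis
    using measurable_space[OF I_measurable] measurable_space[OF U0_measurable]
      measurable_space[OF U1_measurable]
    by (simp add: vimage_def space_PiM Int_def conj_commute cong: conj_cong)
qed

lemma indep_var_U0_U1: "indep_var borel_vec U0 borel_vec U1"
proof -
  have "indep_var borel_vec ((\<lambda>f. f 1) \<circ> (\<lambda>\<omega>. restrict (\<lambda>k. ([I, U0, U1] ! k) \<omega>) {1}))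
      borel_vec ((\<lambda>f. f 2) \<circ> (\<lambda>\<omega>. restrict (\<lambda>k. ([I, U0, U1] ! k) \<omega>) {2}))"
    by (intro indep_var_compose[OF indep_var_restrict[OF indep_I_U0_U1]])
      (auto intro!: measurable_component_singleton)
  then show ?thesis
    by (simp add: comp_def)
qed

lemma distr_U0U1:
  assumes "d \<noteq> 0"
  shows "distr M (borel_vec \<Otimes>\<^sub>M borel_vec) (\<lambda>\<omega>. (U0 \<omega>, U1 \<omega>)) = uniform01_vec \<Otimes>\<^sub>M uniform01_vec"
proof -
  have "distr M borel_vec U0 = uniform01_vec" "distr M borel_vec U1 = uniform01_vec"
    using assms distr_U0 distr_U1
    by (auto intro!: distr_PiM_of_indep_components indep_U0 indep_U1)
  with indep_var_U0_U1 show ?thesis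
    by (simp add: indep_var_distribution_eq)
qed

lemma integrable_continuous_Lam:
  assumes "continuous_on UNIV \<phi>"
  shows "integrable M (\<lambda>\<omega>. \<phi> (Lam \<omega>) :: real)"
proof -
  obtain B where B: "\<And>x. x \<in> {0..1} \<Longrightarrow> norm (\<phi> x) \<le> B"
    using compact_imp_bounded[OF compact_continuous_image[OF continuous_on_subset[OF assms] compact_Icc]]
    by (meson bounded_iff image_eqI subset_UNIV)
  have [measurable]: "\<phi> \<in> borel_measurable borel"
    by (rule borel_measurable_continuous_onI[OF assms])
  show ?thesis
    by (rule integrable_const_bound[where B = B]) (use Lam_AE_in_unit_interval B in auto)
qed

lemma prob_I_event:
  assumes "i \<in> PiE {..<d} (\<lambda>_. {0::nat, 1})"
  shows "prob (I_event i) = expectation (\<lambda>\<omega>. \<Prod>m<d. if i m = 0 then 1 - Lam \<omega> else Lam \<omega>)"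
proof -
  have "\<forall>m<d. i m \<in> {0, 1}"
    using assms by auto
  then show ?thesis
    using assms by (simp add: I_event_def pmf_I bernoulli_weight_eq_prod)
qed

lemma disjoint_family_on_I_event: "disjoint_family_on I_event (PiE {..<d} (\<lambda>_. {0::nat, 1}))"
  unfolding disjoint_family_on_def
proof (intro ballI impI)
  fix i j assume i: "i \<in> PiE {..<d} (\<lambda>_. {0::nat, 1})" and j: "j \<in> PiE {..<d} (\<lambda>_. {0::nat, 1})"
    and "i \<noteq> j"
  then obtain m where "m < d" "i m \<noteq> j m"
    by (metis PiE_ext lessThan_iff)
  then show "I_event i \<inter> I_event j = {}"
    by (auto simp: I_event_def)
qed

lemma AE_in_I_event: "AE \<omega> in M. \<omega> \<in> (\<Union>i\<in>PiE {..<d} (\<lambda>_. {0::nat, 1}). I_event i)"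
proof (rule AE_prob_1)
  let ?B = "PiE {..<d} (\<lambda>_. {0::nat, 1})"
  have "prob (\<Union>i\<in>?B. I_event i) = (\<Sum>i\<in>?B. prob (I_event i))"
  proof (rule finite_measure_finite_Union)
    show "finite ?B" by (simp add: finite_PiE)
    show "I_event ` ?B \<subseteq> events" using I_event_sets by blast
  qed (rule disjoint_family_on_I_event)
  also have "\<dots> = (\<Sum>i\<in>?B. expectation (\<lambda>\<omega>. \<Prod>m<d. if i m = 0 then 1 - Lam \<omega> else Lam \<omega>))"
    by (intro sum.cong refl prob_I_event)
  also have "\<dots> = expectation (\<lambda>\<omega>. \<Sum>i\<in>?B. \<Prod>m<d. if i m = 0 then 1 - Lam \<omega> else Lam \<omega>)"
    by (intro Bochner_Integration.integral_sum[symmetric] integrable_continuous_Lam)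
      (auto intro!: continuous_intros)
  also have "\<dots> = 1"
    by (subst sum_prod_PiE_01[where f = "\<lambda>m y. if y = 0 then 1 - Lam _ else Lam _"])
      (simp add: prob_space)
  finally show "prob (\<Union>i\<in>?B. I_event i) = 1" .
qed

lemma prob_eq_sum_prob_I_event_Int:
  assumes [measurable]: "A \<in> events"
  shows "prob A = (\<Sum>i\<in>PiE {..<d} (\<lambda>_. {0::nat, 1}). prob (I_event i \<inter> A))"
proof -
  let ?B = "PiE {..<d} (\<lambda>_. {0::nat, 1})"
  have "prob A = prob (\<Union>i\<in>?B. I_event i \<inter> A)"
    using AE_in_I_event by (intro finite_measure_eq_AE) (auto simp: finite_PiE intro!: sets.finite_UN)
  also have "\<dots> = (\<Sum>i\<in>?B. prob (I_event i \<inter> A))"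
    using disjoint_family_on_I_event
    by (intro finite_measure_finite_Union) (auto simp: finite_PiE disjoint_family_on_def)
  finally show ?thesis .
qed

lemma prob_U0_U1_powr_mult_le:
  assumes d: "d \<noteq> 0" and e: "\<And>m. m < d \<Longrightarrow> e m \<in> {0, 1}"
    and u: "\<And>m. m < d \<Longrightarrow> u m \<in> {0..1}"
  shows "prob {\<omega> \<in> space M. \<forall>m<d. U0 \<omega> m powr (1 - p) * U1 \<omega> m powr real (e m) \<le> u m}
         = (\<Prod>m<d. powr_mult_uniform_cdf (1 - p) (e m) (u m))"
proof -
  define T where "T = {xy \<in> space (borel_vec \<Otimes>\<^sub>M borel_vec).
    \<forall>m<d. fst xy m powr (1 - p) * snd xy m powr real (e m) \<le> u m}"
  have T: "T \<in> sets (borel_vec \<Otimes>\<^sub>M borel_vec)"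
    unfolding T_def by measurable
  have "{\<omega> \<in> space M. \<forall>m<d. U0 \<omega> m powr (1 - p) * U1 \<omega> m powr real (e m) \<le> u m}
      = (\<lambda>\<omega>. (U0 \<omega>, U1 \<omega>)) -` T \<inter> space M"
    using measurable_space[OF U0_measurable] measurable_space[OF U1_measurable]
    by (auto simp: T_def space_pair_measure)
  then have "prob {\<omega> \<in> space M. \<forall>m<d. U0 \<omega> m powr (1 - p) * U1 \<omega> m powr real (e m) \<le> u m}
      = measure (distr M (borel_vec \<Otimes>\<^sub>M borel_vec) (\<lambda>\<omega>. (U0 \<omega>, U1 \<omega>))) T"
    using T by (simp add: measure_distr)
  also have "\<dots> = measure (uniform01_vec \<Otimes>\<^sub>M uniform01_vec) T"
    by (simp add: distr_U0U1[OF d])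
  also have "T = {xy \<in> space (uniform01_vec \<Otimes>\<^sub>M uniform01_vec).
      \<forall>m<d. fst xy m powr (1 - p) * snd xy m powr real (e m) \<le> u m}"
    by (simp add: T_def space_pair_measure space_PiM)
  also have "measure (uniform01_vec \<Otimes>\<^sub>M uniform01_vec) \<dots> = (\<Prod>m<d. powr_mult_uniform_cdf (1 - p) (e m) (u m))"
    by (rule measure_PiM_uniform01_pair_powr_mult_le) (use p_pos p_less_1 u e in auto)
  finally show ?thesis .
qed

lemma prob_I_event_Int_U_le:
  assumes d: "d \<noteq> 0" and i: "i \<in> PiE {..<d} (\<lambda>_. {0::nat, 1})"
    and u: "\<And>m. m < d \<Longrightarrow> u m \<in> {0..1}"
  shows "prob (I_event i \<inter> {\<omega> \<in> space M. \<forall>m<d. U \<omega> m \<le> u m})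
         = prob (I_event i) * (\<Prod>m<d. powr_mult_uniform_cdf (1 - p) (i m) (u m))"
proof -
  define S where "S = {f \<in> space borel_vec. \<forall>m<d. f m = real (i m)}"
  define T where "T = {xy \<in> space (borel_vec \<Otimes>\<^sub>M borel_vec).
    \<forall>m<d. fst xy m powr (1 - p) * snd xy m powr real (i m) \<le> u m}"
  have S: "S \<in> sets borel_vec" unfolding S_def by measurable
  have T: "T \<in> sets (borel_vec \<Otimes>\<^sub>M borel_vec)" unfolding T_def by measurable
  have space: "I \<omega> \<in> space borel_vec" "U0 \<omega> \<in> space borel_vec" "U1 \<omega> \<in> space borel_vec"
    if "\<omega> \<in> space M" for \<omega>
    using that measurable_space[OF I_measurable] measurable_space[OF U0_measurable]
      measurable_space[OF U1_measurable] by auto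
  have "I_event i \<inter> {\<omega> \<in> space M. \<forall>m<d. U \<omega> m \<le> u m} = {\<omega> \<in> space M. I \<omega> \<in> S \<and> (U0 \<omega>, U1 \<omega>) \<in> T}"
    using space by (auto simp: I_event_def S_def T_def U_def space_pair_measure)
  moreover have "I_event i = {\<omega> \<in> space M. I \<omega> \<in> S}"
    using space by (auto simp: I_event_def S_def)
  moreover have "{\<omega> \<in> space M. (U0 \<omega>, U1 \<omega>) \<in> T}
      = {\<omega> \<in> space M. \<forall>m<d. U0 \<omega> m powr (1 - p) * U1 \<omega> m powr real (i m) \<le> u m}"
    using space by (auto simp: T_def space_pair_measure)
  moreover have "prob {\<omega> \<in> space M. \<forall>m<d. U0 \<omega> m powr (1 - p) * U1 \<omega> m powr real (i m) \<le> u m}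
      = (\<Prod>m<d. powr_mult_uniform_cdf (1 - p) (i m) (u m))"
    by (rule prob_U0_U1_powr_mult_le[OF d]) (use i u in auto)
  ultimately show ?thesis
    using prob_I_in_Int_U0U1_in[OF S T] by simp
qed

lemma prob_I_event_mult_prod:
  assumes i: "i \<in> PiE {..<d} (\<lambda>_. {0::nat, 1})"
  shows "prob (I_event i) * (\<Prod>m<d. g m (i m))
         = expectation (\<lambda>\<omega>. \<Prod>m<d. if i m = 0 then (1 - Lam \<omega>) * g m 0 else Lam \<omega> * g m 1)"
proof -
  have "prob (I_event i) * (\<Prod>m<d. g m (i m))
      = expectation (\<lambda>\<omega>. (\<Prod>m<d. if i m = 0 then 1 - Lam \<omega> else Lam \<omega>) * (\<Prod>m<d. g m (i m)))"
    unfolding prob_I_event[OF i] by (rule integral_mult_left_zero[symmetric])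
  also have "\<dots> = expectation (\<lambda>\<omega>. \<Prod>m<d. if i m = 0 then (1 - Lam \<omega>) * g m 0 else Lam \<omega> * g m 1)"
  proof (intro Bochner_Integration.integral_cong refl)
    fix \<omega>
    have "(if i m = 0 then 1 - Lam \<omega> else Lam \<omega>) * g m (i m)
        = (if i m = 0 then (1 - Lam \<omega>) * g m 0 else Lam \<omega> * g m 1)" if "m < d" for m
      using PiE_mem[OF i, of m] that by (cases "i m = 0") auto
    then show "(\<Prod>m<d. if i m = 0 then 1 - Lam \<omega> else Lam \<omega>) * (\<Prod>m<d. g m (i m))
        = (\<Prod>m<d. if i m = 0 then (1 - Lam \<omega>) * g m 0 else Lam \<omega> * g m 1)"
      by (simp add: prod.distrib[symmetric])
  qed
  finally show ?thesis .
qed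

lemma cond_cdf_eq_mixture:
  "(1 - L) * powr_mult_uniform_cdf (1 - p) 0 v + L * powr_mult_uniform_cdf (1 - p) 1 v = cond_cdf L v"
  using p_pos by (simp add: powr_mult_uniform_cdf_def cond_cdf_def field_simps)

lemma prob_U_le:
  assumes u: "\<And>m. m < d \<Longrightarrow> u m \<in> {0..1}"
  shows "prob {\<omega> \<in> space M. \<forall>m<d. U \<omega> m \<le> u m} = expectation (\<lambda>\<omega>. \<Prod>m<d. cond_cdf (Lam \<omega>) (u m))"
proof (cases "d = 0")
  case True
  then show ?thesis by (simp add: prob_space)
next
  case d: False
  let ?B = "PiE {..<d} (\<lambda>_. {0::nat, 1})"
  let ?G = "\<lambda>m e. powr_mult_uniform_cdf (1 - p) e (u m)"
  let ?f = "\<lambda>i L. \<Prod>m<d. if i m = 0 then (1 - L) * ?G m 0 else L * ?G m 1"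
  have "prob {\<omega> \<in> space M. \<forall>m<d. U \<omega> m \<le> u m}
      = (\<Sum>i\<in>?B. prob (I_event i \<inter> {\<omega> \<in> space M. \<forall>m<d. U \<omega> m \<le> u m}))"
    by (rule prob_eq_sum_prob_I_event_Int) measurable
  also have "\<dots> = (\<Sum>i\<in>?B. expectation (\<lambda>\<omega>. ?f i (Lam \<omega>)))"
  proof (intro sum.cong refl)
    fix i assume i: "i \<in> ?B"
    show "prob (I_event i \<inter> {\<omega> \<in> space M. \<forall>m<d. U \<omega> m \<le> u m}) = expectation (\<lambda>\<omega>. ?f i (Lam \<omega>))"
      using prob_I_event_Int_U_le[OF d i u] prob_I_event_mult_prod[OF i, of ?G] by simp
  qed
  also have "\<dots> = expectation (\<lambda>\<omega>. \<Sum>i\<in>?B. ?f i (Lam \<omega>))"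
    by (intro Bochner_Integration.integral_sum[symmetric] integrable_continuous_Lam)
      (auto intro!: continuous_intros)
  also have "\<dots> = expectation (\<lambda>\<omega>. \<Prod>m<d. (1 - Lam \<omega>) * ?G m 0 + Lam \<omega> * ?G m 1)"
    by (subst sum_prod_PiE_01[where f = "\<lambda>m e. if e = 0 then (1 - Lam _) * ?G m 0 else Lam _ * ?G m 1"])
      simp
  also have "\<dots> = expectation (\<lambda>\<omega>. \<Prod>m<d. cond_cdf (Lam \<omega>) (u m))"
    by (simp only: cond_cdf_eq_mixture)
  finally show ?thesis .
qed

lemma AE_I_01: "AE \<omega> in M. \<forall>m<d. I \<omega> m = 0 \<or> I \<omega> m = 1"
  using AE_in_I_event
proof eventually_elim
  case (elim \<omega>)
  then obtain i where "i \<in> PiE {..<d} (\<lambda>_. {0::nat, 1})" "\<omega> \<in> I_event i"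
    by blast
  then show ?case
    by (auto simp: I_event_def)
qed

lemma AE_U0_U1_in_unit_interval: "AE \<omega> in M. \<forall>m<d. U0 \<omega> m \<in> {0..1} \<and> U1 \<omega> m \<in> {0..1}"
proof -
  have "AE \<omega> in M. U0 \<omega> m \<in> {0..1} \<and> U1 \<omega> m \<in> {0..1}" if "m < d" for m
    using that distr_U0 distr_U1 by (intro AE_conjI AE_uniform01_in_unit_interval) auto
  then have "AE \<omega> in M. \<forall>m\<in>{..<d}. U0 \<omega> m \<in> {0..1} \<and> U1 \<omega> m \<in> {0..1}"
    by (intro AE_finite_allI) auto
  then show ?thesis
    by eventually_elim auto
qed

lemma U_nonneg: "0 \<le> U \<omega> m"
  by (simp add: U_def)

lemma AE_U_le_1: "AE \<omega> in M. \<forall>m<d. U \<omega> m \<le> 1"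
  using AE_U0_U1_in_unit_interval AE_I_01
proof eventually_elim
  case (elim \<omega>)
  show ?case
  proof (intro allI impI)
    fix m assume m: "m < d"
    have "U0 \<omega> m powr (1 - p) \<le> 1" "U1 \<omega> m powr I \<omega> m \<le> 1"
      using elim m p_less_1 by (auto intro: powr_le1)
    then show "U \<omega> m \<le> 1"
      unfolding U_def by (intro mult_le_one) auto
  qed
qed

lemma cond_cdf_0 [simp]: "cond_cdf L 0 = 0"
  by (simp add: cond_cdf_def)

lemma cond_cdf_1 [simp]: "cond_cdf L 1 = 1"
  by (simp add: cond_cdf_def)

lemma prob_U_le_truncate:
  "prob {\<omega> \<in> space M. \<forall>m<d. U \<omega> m \<le> x m}
   = expectation (\<lambda>\<omega>. \<Prod>m<d. cond_cdf (Lam \<omega>) (max 0 (min 1 (x m))))"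
proof (cases "\<exists>m<d. x m < 0")
  case True
  then obtain m where m: "m < d" "x m < 0" by blast
  then have "\<not> U \<omega> m \<le> x m" for \<omega>
    using U_nonneg[of \<omega> m] by linarith
  then have "{\<omega> \<in> space M. \<forall>m<d. U \<omega> m \<le> x m} = {}"
    using m by blast
  moreover have "(\<lambda>\<omega>. \<Prod>m<d. cond_cdf (Lam \<omega>) (max 0 (min 1 (x m)))) = (\<lambda>_. 0)"
    using m by (intro ext prod_zero bexI[of _ m]) auto
  ultimately show ?thesis
    by (simp only:) simp
next
  case False
  have "AE \<omega> in M. (\<forall>m<d. U \<omega> m \<le> x m) \<longleftrightarrow> (\<forall>m<d. U \<omega> m \<le> max 0 (min 1 (x m)))"
  proof -
    have pointwise: "U \<omega> m \<le> x m \<longleftrightarrow> U \<omega> m \<le> max 0 (min 1 (x m))"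
      if "U \<omega> m \<le> 1" "m < d" for \<omega> m
      using that False by auto
    show ?thesis
      using AE_U_le_1 by eventually_elim (use pointwise in blast)
  qed
  then have "prob {\<omega> \<in> space M. \<forall>m<d. U \<omega> m \<le> x m}
      = prob {\<omega> \<in> space M. \<forall>m<d. U \<omega> m \<le> max 0 (min 1 (x m))}"
    by (intro finite_measure_eq_AE) auto
  also have "\<dots> = expectation (\<lambda>\<omega>. \<Prod>m<d. cond_cdf (Lam \<omega>) (max 0 (min 1 (x m))))"
    by (rule prob_U_le) auto
  finally show ?thesis .
qed

lemma expectation_cond_cdf: "expectation (\<lambda>\<omega>. cond_cdf (Lam \<omega>) v) = v"
proof -
  have "integrable M Lam"
    using integrable_continuous_Lam[of "\<lambda>x. x"] by simp
  then have "expectation (\<lambda>\<omega>. cond_cdf (Lam \<omega>) v)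
      = v powr (1 / (1 - p)) - expectation Lam / p * (v powr (1 / (1 - p)) - v)"
    by (simp add: cond_cdf_def prob_space)
  then show ?thesis
    using p_pos by (simp add: p_def[symmetric])
qed

lemma prob_U_component_le:
  assumes m: "m < d"
  shows "prob {\<omega> \<in> space M. U \<omega> m \<le> t} = max 0 (min 1 t)"
proof -
  let ?x = "\<lambda>k. if k = m then t else 1"
  have "AE \<omega> in M. U \<omega> m \<le> t \<longleftrightarrow> (\<forall>k<d. U \<omega> k \<le> ?x k)"
    using AE_U_le_1 by eventually_elim (use m in auto)
  then have "prob {\<omega> \<in> space M. U \<omega> m \<le> t} = prob {\<omega> \<in> space M. \<forall>k<d. U \<omega> k \<le> ?x k}"
    by (intro finite_measure_eq_AE) auto
  also have "\<dots> = expectation (\<lambda>\<omega>. \<Prod>k<d. cond_cdf (Lam \<omega>) (max 0 (min 1 (?x k))))"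
    by (rule prob_U_le_truncate)
  also have "(\<lambda>\<omega>. \<Prod>k<d. cond_cdf (Lam \<omega>) (max 0 (min 1 (?x k)))) = (\<lambda>\<omega>. cond_cdf (Lam \<omega>) (max 0 (min 1 t)))"
    using m by (simp add: if_distrib[of "\<lambda>y. cond_cdf _ (max 0 (min 1 y))"] prod.delta cong: if_cong)
  finally show ?thesis
    by (simp add: expectation_cond_cdf)
qed

lemma distr_U_component:
  assumes "m < d"
  shows "distr M borel (\<lambda>\<omega>. U \<omega> m) = uniform01"
proof (rule cdf_unique)
  show "real_distribution uniform01"
    using prob_space_uniform01 by (simp add: real_distribution_def real_distribution_axioms_def)
  show "cdf (distr M borel (\<lambda>\<omega>. U \<omega> m)) = cdf uniform01"
    using assms
    by (auto simp: cdf_def measure_distr vimage_def Int_def conj_commute prob_U_component_le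
        measure_uniform01_atMost)
qed simp

lemma is_copula_expectation_cond_cdf:
  "is_copula d (\<lambda>u. expectation (\<lambda>\<omega>. \<Prod>m<d. cond_cdf (Lam \<omega>) (u m)))"
proof -
  let ?V = "\<lambda>\<omega>. restrict (U \<omega>) {..<d}"
  define N where "N = distr M borel_vec ?V"
  have V [measurable]: "?V \<in> M \<rightarrow>\<^sub>M borel_vec"
    by (intro measurable_restrict) simp
  have N: "prob_space N" "sets N = sets borel_vec"
    unfolding N_def by (auto intro: prob_space_distr)
  have marginals: "distr N borel (\<lambda>v. v m) = uniform01" if m: "m < d" for m
  proof -
    have "distr N borel (\<lambda>v. v m) = distr M borel (\<lambda>\<omega>. U \<omega> m)"
      unfolding N_def using m by (subst distr_distr) (auto simp: comp_def)
    then show ?thesis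
      using distr_U_component[OF m] by simp
  qed
  have cdf: "expectation (\<lambda>\<omega>. \<Prod>m<d. cond_cdf (Lam \<omega>) (u m)) = measure N {v \<in> space N. \<forall>m<d. v m \<le> u m}"
    if u: "u \<in> PiE {..<d} (\<lambda>_. {0..1})" for u
  proof -
    have "?V -` {v \<in> space borel_vec. \<forall>m<d. v m \<le> u m} \<inter> space M = {\<omega> \<in> space M. \<forall>m<d. U \<omega> m \<le> u m}"
      by (auto simp: space_PiM)
    then have "measure N {v \<in> space N. \<forall>m<d. v m \<le> u m} = prob {\<omega> \<in> space M. \<forall>m<d. U \<omega> m \<le> u m}"
      unfolding N_def by (subst measure_distr) auto
    also have "\<dots> = expectation (\<lambda>\<omega>. \<Prod>m<d. cond_cdf (Lam \<omega>) (u m))"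
      by (rule prob_U_le) (use u in \<open>auto simp: PiE_iff\<close>)
    finally show ?thesis ..
  qed
  show ?thesis
    unfolding is_copula_def
  proof (intro exI[of _ N] conjI allI impI ballI)
    show "prob_space N" "sets N = sets borel_vec"
      by (fact N)+
  qed (fact marginals cdf)+
qed

lemma is_copula_of_U: "is_copula_of M d U (\<lambda>u. expectation (\<lambda>\<omega>. \<Prod>m<d. cond_cdf (Lam \<omega>) (u m)))"
  unfolding is_copula_of_def
proof (intro conjI allI is_copula_expectation_cond_cdf)
  fix x :: "nat \<Rightarrow> real"
  have "(\<lambda>\<omega>. \<Prod>m<d. cond_cdf (Lam \<omega>) (restrict (\<lambda>m. prob {\<omega> \<in> space M. U \<omega> m \<le> x m}) {..<d} m))
      = (\<lambda>\<omega>. \<Prod>m<d. cond_cdf (Lam \<omega>) (max 0 (min 1 (x m))))"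
    by (simp add: prob_U_component_le)
  then show "prob {\<omega> \<in> space M. \<forall>m<d. U \<omega> m \<le> x m}
      = expectation (\<lambda>\<omega>. \<Prod>m<d. cond_cdf (Lam \<omega>) (restrict (\<lambda>m. prob {\<omega> \<in> space M. U \<omega> m \<le> x m}) {..<d} m))"
    by (simp add: prob_U_le_truncate)
qed

lemma cond_cdf_eq_mult:
  assumes "0 < v"
  shows "cond_cdf L v = v powr (1 / (1 - p)) * (1 - L / p * (1 - v powr (- (p / (1 - p)))))"
proof -
  have "v powr (1 / (1 - p)) * v powr (- (p / (1 - p))) = v powr (1 / (1 - p) - p / (1 - p))"
    by (simp add: powr_add[symmetric])
  also have "1 / (1 - p) - p / (1 - p) = 1"
    using p_less_1 by (simp add: field_simps)
  finally have "v powr (1 / (1 - p)) * v powr (- (p / (1 - p))) = v"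
    using assms by simp
  then show ?thesis
    by (simp add: cond_cdf_def algebra_simps)
qed

lemma expectation_prod_cond_cdf_expand:
  assumes u: "u \<in> PiE {..<d} (\<lambda>_. {0<..1})"
  shows "expectation (\<lambda>\<omega>. \<Prod>m<d. cond_cdf (Lam \<omega>) (u m))
         = (\<Prod>m<d. u m powr (1 / (1 - p))) *
           (1 + (\<Sum>k = 1..d. (-1) ^ k *
                  (\<Sum>J \<in> {J. J \<subseteq> {..<d} \<and> card J = k}.
                     expectation (\<lambda>\<omega>. Lam \<omega> ^ k) / p ^ k *
                     (\<Prod>j\<in>J. 1 - u j powr (- (p / (1 - p)))))))"
proof -
  define S where "S k = (\<Sum>J\<in>{J. J \<subseteq> {..<d} \<and> card J = k}. \<Prod>j\<in>J. 1 - u j powr (- (p / (1 - p))))" for k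
  let ?P = "\<Prod>m<d. u m powr (1 / (1 - p))"
  have "(\<Prod>m<d. cond_cdf L (u m)) = ?P * (1 + (\<Sum>k = 1..d. ((-1) ^ k * S k / p ^ k) * L ^ k))" for L
  proof -
    have "(\<Prod>m<d. cond_cdf L (u m))
        = ?P * (\<Prod>m<d. 1 - L / p * (1 - u m powr (- (p / (1 - p)))))"
      using u by (simp add: cond_cdf_eq_mult prod.distrib PiE_iff)
    also have "(\<Prod>m<d. 1 - L / p * (1 - u m powr (- (p / (1 - p)))))
        = 1 + (\<Sum>k = 1..d. (-1) ^ k * (L / p) ^ k * S k)"
      unfolding S_def using prod_one_minus_mult_expand[of "{..<d}" "L / p"] by simp
    also have "(\<Sum>k = 1..d. (-1) ^ k * (L / p) ^ k * S k) = (\<Sum>k = 1..d. ((-1) ^ k * S k / p ^ k) * L ^ k)"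
      by (intro sum.cong refl) (simp add: power_divide)
    finally show ?thesis .
  qed
  then have "expectation (\<lambda>\<omega>. \<Prod>m<d. cond_cdf (Lam \<omega>) (u m))
      = ?P * expectation (\<lambda>\<omega>. 1 + (\<Sum>k = 1..d. ((-1) ^ k * S k / p ^ k) * Lam \<omega> ^ k))"
    by simp
  also have "expectation (\<lambda>\<omega>. 1 + (\<Sum>k = 1..d. ((-1) ^ k * S k / p ^ k) * Lam \<omega> ^ k))
      = 1 + (\<Sum>k = 1..d. ((-1) ^ k * S k / p ^ k) * expectation (\<lambda>\<omega>. Lam \<omega> ^ k))"
  proof -
    have "integrable M (\<lambda>\<omega>. Lam \<omega> ^ k)" for k
      using integrable_continuous_Lam[of "\<lambda>x. x ^ k"] by (simp add: continuous_on_power continuous_on_id)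
    then show ?thesis
      by (subst Bochner_Integration.integral_add) (auto simp: integral_sum prob_space)
  qed
  finally show ?thesis
    by (simp add: S_def sum_distrib_left sum_divide_distrib mult_ac)
qed

end

theorem proposition5p3:
  fixes M :: "'a measure" and d :: nat
    and Lam :: "'a \<Rightarrow> real"
    and I U0 U1 :: "'a \<Rightarrow> nat \<Rightarrow> real"
    and p :: real
  assumes "prob_space M"
    and "Lam \<in> borel_measurable M"
    and "AE \<omega> in M. Lam \<omega> \<in> {0..1}"
    and p_def: "p = prob_space.expectation M Lam"
    and "0 < p" and "p < 1"
    and "I \<in> M \<rightarrow>\<^sub>M PiM {..<d} (\<lambda>_. borel)"
    and "U0 \<in> M \<rightarrow>\<^sub>M PiM {..<d} (\<lambda>_. borel)"
    and "U1 \<in> M \<rightarrow>\<^sub>M PiM {..<d} (\<lambda>_. borel)"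
    and pmf_I: "\<And>i. i \<in> PiE {..<d} (\<lambda>_. {0::nat, 1}) \<Longrightarrow>
        measure M {\<omega> \<in> space M. \<forall>m<d. I \<omega> m = real (i m)} =
        prob_space.expectation M
          (\<lambda>\<omega>. Lam \<omega> ^ (\<Sum>m<d. i m) * (1 - Lam \<omega>) ^ (d - (\<Sum>m<d. i m)))"
    and "prob_space.indep_vars M (\<lambda>_. borel) (\<lambda>m \<omega>. U0 \<omega> m) {..<d}"
    and "prob_space.indep_vars M (\<lambda>_. borel) (\<lambda>m \<omega>. U1 \<omega> m) {..<d}"
    and "\<And>m. m < d \<Longrightarrow> distr M borel (\<lambda>\<omega>. U0 \<omega> m) = uniform_measure lborel {0..1}"
    and "\<And>m. m < d \<Longrightarrow> distr M borel (\<lambda>\<omega>. U1 \<omega> m) = uniform_measure lborel {0..1}"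
    and "prob_space.indep_vars M (\<lambda>_. PiM {..<d} (\<lambda>_. borel)) (\<lambda>k. [I, U0, U1] ! k) {0, 1, 2}"
  shows
    "is_copula_of M d
        (\<lambda>\<omega> m. U0 \<omega> m powr (1 - p) * U1 \<omega> m powr I \<omega> m)
        (\<lambda>u. prob_space.expectation M
           (\<lambda>\<omega>. \<Prod>m<d. u m powr (1 / (1 - p))
                      - Lam \<omega> / p * (u m powr (1 / (1 - p)) - u m)))
     \<and> (\<forall>u \<in> PiE {..<d} (\<lambda>_. {0<..1}).
          prob_space.expectation M
           (\<lambda>\<omega>. \<Prod>m<d. u m powr (1 / (1 - p))
                      - Lam \<omega> / p * (u m powr (1 / (1 - p)) - u m))
          = (\<Prod>m<d. u m powr (1 / (1 - p))) *
            (1 + (\<Sum>k = 1..d. (-1) ^ k *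
                   (\<Sum>J \<in> {J. J \<subseteq> {..<d} \<and> card J = k}.
                      prob_space.expectation M (\<lambda>\<omega>. Lam \<omega> ^ k) / p ^ k *
                      (\<Prod>j\<in>J. 1 - u j powr (- (p / (1 - p))))))))"
proof -
  interpret bernoulli_mixture_model M d Lam I U0 U1 p
    by (rule bernoulli_mixture_model.intro[OF assms(1)], unfold_locales) (use assms in auto)
  have "(\<lambda>\<omega> m. U0 \<omega> m powr (1 - p) * U1 \<omega> m powr I \<omega> m) = U"
    by (simp add: fun_eq_iff U_def)
  moreover have "(\<lambda>\<omega>. \<Prod>m<d. u m powr (1 / (1 - p)) - Lam \<omega> / p * (u m powr (1 / (1 - p)) - u m))
      = (\<lambda>\<omega>. \<Prod>m<d. cond_cdf (Lam \<omega>) (u m))" for u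
    by (simp add: cond_cdf_def)
  ultimately show ?thesis
    using is_copula_of_U expectation_prod_cond_cdf_expand by simp
qed

end
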